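(* Let $n\ge2$, $h=0$, $\epsilon\in[-1,1]$. For any two distinct stable states $s_1,s_2\in\mathcal X_s$, $$\Gamma_s:=\Phi(s_1,s_2)-H(s_1)=\begin{cases}\frac{n^2}{2}+|\epsilon|n & n\text{ even},\\ \frac{n^2-1}{2}+|\epsilon|(n+1) & n\text{ odd}.\end{cases}$$
   Context: Setup. The graph $\mathcal G(2,n)$ has vertex set $V=V^{(1)}\cup V^{(2)}$ with $V^{(1)}=\{1,\dots,n\}$, $V^{(2)}=\{n+1,\dots,2n\}$; its edge set is $E=E_{\mathrm{int}}\cup E_{\mathrm{cross}}$, where $E_{\mathrm{int}}$ consists of all pairs of distinct vertices in the same $V^{(k)}$ and $E_{\mathrm{cross}}=\{\{i,i+n\}:1\le i\le n\}$. The configuration space is $\mathcal X=\{-1,+1\}^V$ and $H(\sigma)=-\sum_{\{i,j\}\in E_{\mathrm{int}}}\sigma_i\sigma_j-\epsilon\sum_{\{i,j\}\in E_{\mathrm{cross}}}\sigma_i\sigma_j-h\sum_{i\in V}\sigma_i$. The stable states $\mathcal X_s$ are the global minimizers of $H$. Two configurations are neighbours if they differ at exactly one vertex; a path is a finite sequence of configurations with consecutive ones neighbours; $\Phi(\eta,\eta')=\min_{\omega:\eta\to\eta'}\max_{\zeta\in\omega}H(\zeta)$, the minimum over paths from $\eta$ to $\eta'$. *)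

theory Defs
  imports Main Complex_Main
begin

text \<open>Graph G(2,n): vertices 1..2n; V1 = 1..n, V2 = n+1..2n.\<close>

definition verts :: "nat \<Rightarrow> nat set" where
  "verts n = {1..2*n}"

text \<open>Internal edges as ordered pairs (i,j) with i < j in the same block
  (each unordered edge counted once).\<close>
definition int_edges :: "nat \<Rightarrow> (nat \<times> nat) set" where
  "int_edges n = {(i,j). 1 \<le> i \<and> i < j \<and> j \<le> n} \<union> {(i,j). n+1 \<le> i \<and> i < j \<and> j \<le> 2*n}"

definition cross_edges :: "nat \<Rightarrow> (nat \<times> nat) set" where
  "cross_edges n = {(i, i+n) | i. 1 \<le> i \<and> i \<le> n}"

text \<open>Configurations: spins +1/-1 on the vertices, 0 (irrelevant dummy value) elsewhere.\<close>
definition configs :: "nat \<Rightarrow> (nat \<Rightarrow> int) set" where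
  "configs n = {\<sigma>. (\<forall>i\<in>verts n. \<sigma> i = 1 \<or> \<sigma> i = -1) \<and> (\<forall>i. i \<notin> verts n \<longrightarrow> \<sigma> i = 0)}"

definition Ham :: "nat \<Rightarrow> real \<Rightarrow> real \<Rightarrow> (nat \<Rightarrow> int) \<Rightarrow> real" where
  "Ham n \<epsilon> h \<sigma> =
     - (\<Sum>(i,j)\<in>int_edges n. real_of_int (\<sigma> i * \<sigma> j))
     - \<epsilon> * (\<Sum>(i,j)\<in>cross_edges n. real_of_int (\<sigma> i * \<sigma> j))
     - h * (\<Sum>i\<in>verts n. real_of_int (\<sigma> i))"

definition stable_states :: "nat \<Rightarrow> real \<Rightarrow> real \<Rightarrow> (nat \<Rightarrow> int) set" where
  "stable_states n \<epsilon> h =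
     {\<sigma> \<in> configs n. \<forall>\<tau>\<in>configs n. Ham n \<epsilon> h \<sigma> \<le> Ham n \<epsilon> h \<tau>}"

definition neighbours :: "nat \<Rightarrow> (nat \<Rightarrow> int) \<Rightarrow> (nat \<Rightarrow> int) \<Rightarrow> bool" where
  "neighbours n \<sigma> \<tau> \<longleftrightarrow> \<sigma> \<in> configs n \<and> \<tau> \<in> configs n \<and> card {i \<in> verts n. \<sigma> i \<noteq> \<tau> i} = 1"

definition is_path :: "nat \<Rightarrow> (nat \<Rightarrow> int) list \<Rightarrow> (nat \<Rightarrow> int) \<Rightarrow> (nat \<Rightarrow> int) \<Rightarrow> bool" where
  "is_path n p \<eta> \<eta>' \<longleftrightarrow> p \<noteq> [] \<and> hd p = \<eta> \<and> last p = \<eta>' \<and> set p \<subseteq> configs n \<and>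
     (\<forall>k. Suc k < length p \<longrightarrow> neighbours n (p ! k) (p ! Suc k))"

definition Phi :: "nat \<Rightarrow> real \<Rightarrow> real \<Rightarrow> (nat \<Rightarrow> int) \<Rightarrow> (nat \<Rightarrow> int) \<Rightarrow> real" where
  "Phi n \<epsilon> h \<eta> \<eta>' = Min {Max (Ham n \<epsilon> h ` set p) | p. is_path n p \<eta> \<eta>'}"

end

theory Submission
  imports Defs
begin

text \<open>
  With \<open>h = 0\<close> the energy is a function of the block magnetizations \<open>m\<^sub>1, m\<^sub>2\<close> and of
  the overlap \<open>X = \<Sum>i. \<sigma>\<^sub>i \<sigma>\<^sub>i\<^sub>+\<^sub>n\<close>: it exceeds the ground energy by
  \<open>(n\<^sup>2 - m\<^sub>1\<^sup>2)/2 + (n\<^sup>2 - m\<^sub>2\<^sup>2)/2 + (\<bar>\<epsilon>\<bar>n - \<epsilon>X)\<close>, a sum of three nonnegative terms.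
  Hence the stable states have constant blocks and \<open>\<epsilon>X = \<bar>\<epsilon>\<bar>n\<close>.

  Upper bound: flip the sites from \<open>s\<^sub>1\<close> to \<open>s\<^sub>2\<close> one at a time, first block then
  second block. While one block is flipped the other is constant, so the excess depends only on
  the magnetization \<open>u \<equiv> n (mod 2)\<close> of the flipping block, and is maximal at \<open>u = t\<close>,
  where \<open>t = 0\<close> for even \<open>n\<close> and \<open>t = -1\<close> for odd \<open>n\<close>.

  Lower bound: a spin flip changes a magnetization by at most 2 and keeps its parity, so along
  any path some magnetization-like quantity that differs at the two ends (\<open>\<plusminus>n\<close> vs \<open>\<mp>n\<close>)
  takes the value \<open>t\<close>. For \<open>\<epsilon> = 0\<close> this is \<open>m\<^sub>1\<close> or \<open>m\<^sub>2\<close>; for \<open>\<epsilon> \<noteq> 0\<close> the stable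
  states are aligned (\<open>m\<^sub>1 = c m\<^sub>2\<close> with \<open>c = sgn \<epsilon>\<close>) and it is \<open>min m\<^sub>1 (c m\<^sub>2)\<close>; there,
  the bound \<open>cX \<le> n - \<bar>m\<^sub>1 - c m\<^sub>2\<bar>\<close> forces the excess up to the barrier.
\<close>

lemma sum_spins_abs_le:
  fixes f :: "'a \<Rightarrow> int"
  assumes "f ` A \<subseteq> {-1, 1}"
  shows "\<bar>sum f A\<bar> \<le> int (card A)"
proof (cases "finite A")
  case True
  have "\<bar>sum f A\<bar> \<le> (\<Sum>i\<in>A. \<bar>f i\<bar>)" by (rule sum_abs)
  also have "\<dots> = (\<Sum>i\<in>A. 1)" using assms by (intro sum.cong) auto
  finally show ?thesis by simp
qed simp

lemma even_sum_spins:
  fixes f :: "'a \<Rightarrow> int"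
  assumes "f ` A \<subseteq> {-1, 1}"
  shows "even (sum f A - int (card A))"
proof (cases "finite A")
  case True
  then show ?thesis using assms
  proof (induction A rule: finite_induct)
    case (insert x F)
    then have "even (sum f F - int (card F))" "f x = 1 \<or> f x = -1" by auto
    then show ?case using insert by auto
  qed simp
qed simp

lemma sum_spins_squared:
  fixes f :: "'a \<Rightarrow> int"
  assumes "f ` A \<subseteq> {-1, 1}"
  shows "(\<Sum>i\<in>A. f i ^ 2) = int (card A)"
proof -
  have "(\<Sum>i\<in>A. f i ^ 2) = (\<Sum>i\<in>A. 1)" using assms by (intro sum.cong) auto
  then show ?thesis by simp
qed

lemma sum_spins_extremal_imp_constant:
  fixes f :: "'a \<Rightarrow> int"
  assumes "finite A" "f ` A \<subseteq> {-1, 1}" "\<bar>sum f A\<bar> = int (card A)"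
  obtains c where "c = 1 \<or> c = -1" "\<forall>i\<in>A. f i = c"
proof -
  define c :: int where "c = (if sum f A \<ge> 0 then 1 else -1)"
  have "(\<Sum>i\<in>A. 1 - c * f i) = int (card A) - c * sum f A"
    by (simp add: sum_subtractf sum_distrib_left)
  also have "\<dots> = 0" using assms(3) by (auto simp: c_def abs_if)
  finally have "\<forall>i\<in>A. 1 - c * f i = 0"
    using assms(1,2) by (subst sum_nonneg_eq_0_iff[symmetric]) (auto simp: c_def)
  then have "\<forall>i\<in>A. f i = c" using assms(2) by (auto simp: c_def)
  moreover have "c = 1 \<or> c = -1" by (simp add: c_def)
  ultimately show ?thesis using that by blast
qed

lemma sum_ordered_pairs_product:
  fixes f :: "'a::linorder \<Rightarrow> 'b::comm_ring_1"
  assumes "finite A"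
  shows "2 * (\<Sum>(i, j)\<in>{(i, j). i \<in> A \<and> j \<in> A \<and> i < j}. f i * f j)
           = (sum f A)\<^sup>2 - (\<Sum>i\<in>A. (f i)\<^sup>2)"
  using assms
proof (induction A rule: finite_linorder_max_induct)
  case empty
  then show ?case by simp
next
  case (insert b A)
  let ?P = "\<lambda>A. {(i, j). i \<in> A \<and> j \<in> A \<and> i < j}"
  have fin: "finite (?P A)"
    using finite_subset[of "?P A" "A \<times> A"] insert.hyps(1) by auto
  have "?P (insert b A) = ?P A \<union> (\<lambda>i. (i, b)) ` A"
    using insert.hyps(2) by auto
  moreover have "?P A \<inter> (\<lambda>i. (i, b)) ` A = {}"
    using insert.hyps(2) by auto
  ultimately have "(\<Sum>(i, j)\<in>?P (insert b A). f i * f j)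
      = (\<Sum>(i, j)\<in>?P A. f i * f j) + sum f A * f b"
    using fin insert.hyps(1)
    by (simp add: sum.union_disjoint sum.reindex inj_on_def sum_distrib_right)
  moreover have "b \<notin> A" using insert.hyps(2) by auto
  ultimately show ?case
    using insert.IH insert.hyps(1) by (simp add: power2_eq_square algebra_simps)
qed

section \<open>Energy in terms of block magnetizations\<close>

definition block_mag :: "nat \<Rightarrow> nat \<Rightarrow> (nat \<Rightarrow> int) \<Rightarrow> int" where
  "block_mag n d \<sigma> = (\<Sum>i=1..n. \<sigma> (i + d))"

definition overlap :: "nat \<Rightarrow> (nat \<Rightarrow> int) \<Rightarrow> int" where
  "overlap n \<sigma> = (\<Sum>i=1..n. \<sigma> i * \<sigma> (i + n))"

lemma configs_spin: "\<sigma> \<in> configs n \<Longrightarrow> i \<in> {1..2*n} \<Longrightarrow> \<sigma> i = 1 \<or> \<sigma> i = -1"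
  by (auto simp: configs_def verts_def)

lemma configs_outside_verts: "\<sigma> \<in> configs n \<Longrightarrow> i \<notin> verts n \<Longrightarrow> \<sigma> i = 0"
  by (simp add: configs_def)

lemma configs_block_spins: "\<sigma> \<in> configs n \<Longrightarrow> d \<le> n \<Longrightarrow> (\<lambda>i. \<sigma> (i + d)) ` {1..n} \<subseteq> {-1, 1}"
  by (auto simp: configs_def verts_def)

lemma block_mag_abs_le: "\<sigma> \<in> configs n \<Longrightarrow> d \<le> n \<Longrightarrow> \<bar>block_mag n d \<sigma>\<bar> \<le> int n"
  using sum_spins_abs_le[OF configs_block_spins] by (simp add: block_mag_def)

lemma even_block_mag: "\<sigma> \<in> configs n \<Longrightarrow> d \<le> n \<Longrightarrow> even (block_mag n d \<sigma> - int n)"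
  using even_sum_spins[OF configs_block_spins] by (simp add: block_mag_def)

lemma block_mag_eq_sum: "block_mag n d \<sigma> = sum \<sigma> {d+1..d+n}"
  using sum.shift_bounds_cl_nat_ivl[of \<sigma> 1 d n] by (simp add: block_mag_def add.commute)

lemma int_edges_sum:
  assumes "\<sigma> \<in> configs n"
  shows "2 * (\<Sum>(i, j)\<in>int_edges n. \<sigma> i * \<sigma> j)
           = (block_mag n 0 \<sigma>)\<^sup>2 + (block_mag n n \<sigma>)\<^sup>2 - 2 * int n"
proof -
  let ?P = "\<lambda>A. {(i, j). i \<in> A \<and> j \<in> A \<and> i < j}"
  have block_pairs: "2 * (\<Sum>(i, j)\<in>?P {d+1..d+n}. \<sigma> i * \<sigma> j) = (block_mag n d \<sigma>)\<^sup>2 - int n"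
    if "d \<le> n" for d
  proof -
    have "\<sigma> ` {d+1..d+n} \<subseteq> {-1, 1}"
      using assms that by (auto simp: configs_def verts_def)
    then have "(\<Sum>i\<in>{d+1..d+n}. (\<sigma> i)\<^sup>2) = int n"
      by (simp add: sum_spins_squared)
    then show ?thesis
      using sum_ordered_pairs_product[of "{d+1..d+n}" \<sigma>] by (simp add: block_mag_eq_sum)
  qed
  have edges: "int_edges n = ?P {0+1..0+n} \<union> ?P {n+1..n+n}"
    by (auto simp: int_edges_def)
  have fin: "finite (?P {d+1..d+n})" for d
    by (rule finite_subset[of _ "{d+1..d+n} \<times> {d+1..d+n}"]) auto
  have disj: "?P {0+1..0+n} \<inter> ?P {n+1..n+n} = {}" by auto
  have "(\<Sum>(i, j)\<in>int_edges n. \<sigma> i * \<sigma> j)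
      = (\<Sum>(i, j)\<in>?P {0+1..0+n}. \<sigma> i * \<sigma> j) + (\<Sum>(i, j)\<in>?P {n+1..n+n}. \<sigma> i * \<sigma> j)"
    unfolding edges by (rule sum.union_disjoint[OF fin fin disj])
  then show ?thesis using block_pairs[of 0] block_pairs[of n] by simp
qed

lemma cross_edges_sum: "(\<Sum>(i, j)\<in>cross_edges n. \<sigma> i * \<sigma> j) = overlap n \<sigma>"
proof -
  have "cross_edges n = (\<lambda>i. (i, i + n)) ` {1..n}" by (auto simp: cross_edges_def)
  then show ?thesis by (simp add: overlap_def sum.reindex inj_on_def)
qed

definition ground_energy :: "nat \<Rightarrow> real \<Rightarrow> real" where
  "ground_energy n \<epsilon> = - (real n ^ 2 - real n) - \<bar>\<epsilon>\<bar> * real n"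

definition excess :: "nat \<Rightarrow> real \<Rightarrow> (nat \<Rightarrow> int) \<Rightarrow> real" where
  "excess n \<epsilon> \<sigma> = (real n ^ 2 - of_int (block_mag n 0 \<sigma>) ^ 2) / 2
      + (real n ^ 2 - of_int (block_mag n n \<sigma>) ^ 2) / 2 + (\<bar>\<epsilon>\<bar> * real n - \<epsilon> * of_int (overlap n \<sigma>))"

lemma Ham_eq_ground_energy_plus_excess:
  assumes "\<sigma> \<in> configs n"
  shows "Ham n \<epsilon> 0 \<sigma> = ground_energy n \<epsilon> + excess n \<epsilon> \<sigma>"
proof -
  have "(\<Sum>(i, j)\<in>int_edges n. real_of_int (\<sigma> i * \<sigma> j))
      = (of_int (block_mag n 0 \<sigma>) ^ 2 + of_int (block_mag n n \<sigma>) ^ 2 - 2 * real n) / 2"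
    using arg_cong[OF int_edges_sum[OF assms], of real_of_int]
    by (simp add: of_int_sum case_prod_unfold)
  moreover have "(\<Sum>(i, j)\<in>cross_edges n. real_of_int (\<sigma> i * \<sigma> j)) = of_int (overlap n \<sigma>)"
    using arg_cong[OF cross_edges_sum, of real_of_int] by (simp add: of_int_sum case_prod_unfold)
  ultimately show ?thesis
    by (simp add: Ham_def ground_energy_def excess_def field_simps)
qed

lemma signed_overlap_le:
  assumes "\<sigma> \<in> configs n" "c = 1 \<or> c = -1"
  shows "c * overlap n \<sigma> \<le> int n - \<bar>block_mag n 0 \<sigma> - c * block_mag n n \<sigma>\<bar>"
proof -
  have site: "\<bar>\<sigma> i - c * \<sigma> (i + n)\<bar> \<le> 1 - c * (\<sigma> i * \<sigma> (i + n))" if "i \<in> {1..n}" for i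
    using configs_spin[OF assms(1), of i] configs_spin[OF assms(1), of "i + n"] that assms(2)
    by auto
  have "\<bar>block_mag n 0 \<sigma> - c * block_mag n n \<sigma>\<bar> = \<bar>\<Sum>i=1..n. \<sigma> i - c * \<sigma> (i + n)\<bar>"
    by (simp add: block_mag_def sum_subtractf sum_distrib_left)
  also have "\<dots> \<le> (\<Sum>i=1..n. \<bar>\<sigma> i - c * \<sigma> (i + n)\<bar>)" by (rule sum_abs)
  also have "\<dots> \<le> (\<Sum>i=1..n. 1 - c * (\<sigma> i * \<sigma> (i + n)))" using site by (rule sum_mono)
  also have "\<dots> = int n - c * overlap n \<sigma>"
    by (simp add: overlap_def sum_subtractf sum_distrib_left)
  finally show ?thesis by simp
qed

lemma block_mag_squared_le:
  assumes "\<sigma> \<in> configs n" "d \<le> n"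
  shows "of_int (block_mag n d \<sigma>) ^ 2 \<le> real n ^ 2"
proof -
  have "\<bar>of_int (block_mag n d \<sigma>)\<bar> \<le> real n"
    using block_mag_abs_le[OF assms] by linarith
  then show ?thesis by (metis abs_ge_zero power2_abs power_mono)
qed

lemma overlap_energy_le:
  assumes "\<sigma> \<in> configs n"
  shows "\<epsilon> * of_int (overlap n \<sigma>) \<le> \<bar>\<epsilon>\<bar> * real n"
proof -
  have "\<bar>overlap n \<sigma>\<bar> \<le> int n"
    using signed_overlap_le[OF assms, of 1] signed_overlap_le[OF assms, of "-1"] by linarith
  then have "\<bar>of_int (overlap n \<sigma>)\<bar> \<le> real n" by linarith
  then have "\<bar>\<epsilon>\<bar> * \<bar>of_int (overlap n \<sigma>)\<bar> \<le> \<bar>\<epsilon>\<bar> * real n" by (simp add: mult_left_mono)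
  then show ?thesis by (metis abs_ge_self abs_mult order_trans)
qed

lemma excess_nonneg: "\<sigma> \<in> configs n \<Longrightarrow> 0 \<le> excess n \<epsilon> \<sigma>"
  using block_mag_squared_le[of \<sigma> n 0] block_mag_squared_le[of \<sigma> n n] overlap_energy_le[of \<sigma> n \<epsilon>]
  by (simp add: excess_def)

lemma block_mag_extremal_imp_constant:
  assumes "\<sigma> \<in> configs n" "d \<le> n" "\<bar>block_mag n d \<sigma>\<bar> = int n"
  obtains c where "c = 1 \<or> c = -1" "\<forall>i\<in>{1..n}. \<sigma> (i + d) = c" "block_mag n d \<sigma> = c * int n"
proof -
  obtain c where c: "c = 1 \<or> c = -1" "\<forall>i\<in>{1..n}. \<sigma> (i + d) = c"
    using sum_spins_extremal_imp_constant[OF _ configs_block_spins[OF assms(1,2)]] assms(3)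
    by (auto simp: block_mag_def)
  moreover from c(2) have "block_mag n d \<sigma> = c * int n" by (simp add: block_mag_def)
  ultimately show ?thesis by (rule that)
qed

lemma configs_eqI_extremal_block_mags:
  assumes "\<sigma> \<in> configs n" "\<tau> \<in> configs n"
    and extremal: "\<And>d. d \<in> {0, n} \<Longrightarrow> \<bar>block_mag n d \<sigma>\<bar> = int n"
    and same: "\<And>d. d \<in> {0, n} \<Longrightarrow> block_mag n d \<tau> = block_mag n d \<sigma>"
  shows "\<sigma> = \<tau>"
proof
  fix i
  show "\<sigma> i = \<tau> i"
  proof (cases "i \<in> verts n")
    case True
    then have "i \<in> {1..n} \<or> i \<in> {n+1..n+n}" by (auto simp: verts_def)
    then obtain j d where i: "i = j + d" "j \<in> {1..n}" "d \<in> {0, n}"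
    proof
      assume "i \<in> {1..n}"
      then show ?thesis using that[of i 0] by simp
    next
      assume "i \<in> {n+1..n+n}"
      then have "i = (i - n) + n" "i - n \<in> {1..n}" by auto
      then show ?thesis using that by blast
    qed
    have "d \<le> n" using i(3) by auto
    obtain c where c: "\<forall>i\<in>{1..n}. \<sigma> (i + d) = c" "block_mag n d \<sigma> = c * int n"
      using block_mag_extremal_imp_constant[OF assms(1) \<open>d \<le> n\<close> extremal[OF i(3)]] by blast
    obtain c' where c': "\<forall>i\<in>{1..n}. \<tau> (i + d) = c'" "block_mag n d \<tau> = c' * int n"
      using block_mag_extremal_imp_constant[OF assms(2) \<open>d \<le> n\<close>] extremal[OF i(3)] same[OF i(3)]
      by metis
    have "c = c'" using c(2) c'(2) same[OF i(3)] i(2) by auto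
    then show ?thesis using c(1) c'(1) i by auto
  next
    case False
    then show ?thesis using assms(1,2) by (simp add: configs_outside_verts)
  qed
qed

lemma ground_state_exists: "\<exists>g\<in>configs n. excess n \<epsilon> g = 0"
proof -
  define c :: int where "c = (if \<epsilon> \<ge> 0 then 1 else -1)"
  define g where "g i = (if i \<in> {1..n} then 1 else if i \<in> {n+1..2*n} then c else 0)" for i
  have "g \<in> configs n" by (auto simp: configs_def verts_def g_def c_def)
  moreover have "block_mag n 0 g = int n" "block_mag n n g = c * int n" "overlap n g = c * int n"
    by (simp_all add: block_mag_def overlap_def g_def)
  moreover have "\<epsilon> * of_int c = \<bar>\<epsilon>\<bar>" "(of_int c :: real)\<^sup>2 = 1" by (auto simp: c_def)
  ultimately show ?thesis
    by (intro bexI[of _ g]) (simp_all add: excess_def power_mult_distrib)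
qed

lemma stable_states_eq: "stable_states n \<epsilon> 0 = {s \<in> configs n. excess n \<epsilon> s = 0}"
proof -
  obtain g where g: "g \<in> configs n" "excess n \<epsilon> g = 0" using ground_state_exists by blast
  show ?thesis
    using g excess_nonneg[of _ n \<epsilon>]
    by (force simp: stable_states_def Ham_eq_ground_energy_plus_excess)
qed

lemma excess_eq_0_imp:
  assumes "\<sigma> \<in> configs n" "excess n \<epsilon> \<sigma> = 0"
  shows "\<And>d. d \<in> {0, n} \<Longrightarrow> \<bar>block_mag n d \<sigma>\<bar> = int n"
    and "\<epsilon> * of_int (overlap n \<sigma>) = \<bar>\<epsilon>\<bar> * real n"
proof -
  note terms = block_mag_squared_le[OF assms(1) le0] block_mag_squared_le[OF assms(1) order_refl]
    overlap_energy_le[OF assms(1), of \<epsilon>]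
  show "\<epsilon> * of_int (overlap n \<sigma>) = \<bar>\<epsilon>\<bar> * real n"
    using terms assms(2) unfolding excess_def by argo
  have "of_int (block_mag n 0 \<sigma>) ^ 2 = real n ^ 2 \<and> of_int (block_mag n n \<sigma>) ^ 2 = real n ^ 2"
    using terms assms(2) unfolding excess_def by argo
  moreover fix d :: nat assume "d \<in> {0, n}"
  ultimately have "of_int (block_mag n d \<sigma>) ^ 2 = (of_int (int n) :: real) ^ 2" by auto
  then have "block_mag n d \<sigma> = int n \<or> block_mag n d \<sigma> = - int n"
    by (simp only: of_int_eq_iff of_int_power[symmetric] power2_eq_iff)
  then show "\<bar>block_mag n d \<sigma>\<bar> = int n" by auto
qed

lemma stable_block_constant:
  assumes "s \<in> stable_states n \<epsilon> 0" "d \<in> {0, n}"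
  obtains c where "c = 1 \<or> c = -1" "\<forall>i\<in>{1..n}. s (i + d) = c"
proof -
  have s: "s \<in> configs n" "excess n \<epsilon> s = 0" using assms(1) by (auto simp: stable_states_eq)
  show ?thesis
    using block_mag_extremal_imp_constant[OF s(1) _ excess_eq_0_imp(1)[OF s assms(2)]] assms(2) that
    by auto
qed

lemma stable_aligned:
  fixes \<epsilon> :: real and c :: int
  assumes "s \<in> stable_states n \<epsilon> 0" "\<epsilon> \<noteq> 0" "c = 1 \<or> c = -1" "\<epsilon> * of_int c = \<bar>\<epsilon>\<bar>"
  shows "block_mag n 0 s = c * block_mag n n s"
proof -
  have s: "s \<in> configs n" "excess n \<epsilon> s = 0" using assms(1) by (auto simp: stable_states_eq)
  have "\<bar>\<epsilon>\<bar> * of_int c = \<epsilon>" using assms(3,4) by (auto simp: abs_if split: if_splits)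
  then have "\<bar>\<epsilon>\<bar> * of_int (c * overlap n s) = \<epsilon> * of_int (overlap n s)"
    by (simp flip: mult.assoc)
  also have "\<dots> = \<bar>\<epsilon>\<bar> * real n" using excess_eq_0_imp(2)[OF s] .
  finally have "of_int (c * overlap n s) = (of_int (int n) :: real)" using assms(2) by simp
  then have "c * overlap n s = int n" by (simp only: of_int_eq_iff)
  then show ?thesis using signed_overlap_le[OF s(1) assms(3)] by simp
qed

section \<open>The barrier\<close>

text \<open>For odd \<open>n\<close> both \<open>\<plusminus>1\<close> must be crossed; the level \<open>-1\<close> gives the sharp bound.\<close>

definition critical_mag :: "nat \<Rightarrow> int" where
  "critical_mag n = (if even n then 0 else -1)"

definition barrier :: "nat \<Rightarrow> real \<Rightarrow> real" where
  "barrier n \<epsilon> = (real n ^ 2 - of_int (critical_mag n) ^ 2) / 2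
      + \<bar>\<epsilon>\<bar> * (real n - of_int (critical_mag n))"

lemma even_diff_critical_mag: "even (u - int n) \<Longrightarrow> even (u - critical_mag n)"
  by (cases "even n") (auto simp: critical_mag_def)

lemma critical_mag_range: "- int n \<le> critical_mag n \<and> critical_mag n \<le> int n"
  by (cases n) (auto simp: critical_mag_def)

lemma excess_profile_le_barrier:
  fixes u :: int and e :: real
  assumes "even (u - int n)" "\<bar>e\<bar> \<le> 1"
  shows "(real n ^ 2 - of_int u ^ 2) / 2 + \<bar>e\<bar> * real n - e * of_int u \<le> barrier n e"
proof -
  define t where "t = critical_mag n"
  define w where "w = (if e \<ge> 0 then u else - u)"
  have "e * of_int u = \<bar>e\<bar> * of_int w" "of_int w ^ 2 = (of_int u ^ 2 :: real)"
    by (auto simp: w_def)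
  then have gap: "barrier n e - ((real n ^ 2 - of_int u ^ 2) / 2 + \<bar>e\<bar> * real n - e * of_int u)
      = (of_int w - of_int t) * ((of_int w + of_int t) / 2 + \<bar>e\<bar>)"
    by (simp add: barrier_def t_def field_simps power2_eq_square)
  have "even (w - t)"
    using assms(1) even_diff_critical_mag[of w n] by (auto simp: w_def t_def)
  then have "w = t \<or> w \<ge> t + 2 \<or> w \<le> t - 2" by presburger
  then consider "w = t" | "w \<ge> t + 2" | "w \<le> t - 2" by blast
  then have "0 \<le> (of_int w - of_int t) * ((of_int w + of_int t) / 2 + \<bar>e\<bar>)"
  proof cases
    case 2
    then have "of_int t + 2 \<le> (of_int w :: real)" by simp
    then show ?thesis by (intro mult_nonneg_nonneg) (auto simp: t_def critical_mag_def)
  next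
    case 3
    then have "of_int w \<le> of_int t - (2 :: real)" by simp
    moreover have "of_int t \<le> (0 :: real)" by (simp add: t_def critical_mag_def)
    ultimately have "(of_int w + of_int t) / 2 + \<bar>e\<bar> \<le> 0" using assms(2) by argo
    then show ?thesis using 3 by (intro mult_nonpos_nonpos) auto
  qed simp
  then show ?thesis using gap by linarith
qed

lemma barrier_le_excess_profile:
  fixes v y :: int and e :: real
  assumes "n \<ge> 2" "critical_mag n \<le> v" "v \<le> int n" "y \<le> int n - (v - critical_mag n)" "\<bar>e\<bar> \<le> 1"
  shows "barrier n e \<le> (real n ^ 2 - of_int (critical_mag n) ^ 2) / 2
      + (real n ^ 2 - of_int v ^ 2) / 2 + \<bar>e\<bar> * (real n - of_int y)"
proof -
  define t where "t = critical_mag n"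
  have "int n + v \<ge> 2"
    using assms(1,2) unfolding critical_mag_def by presburger
  then have "real n + of_int v \<ge> 2"
    using of_int_le_iff[of 2 "int n + v", where 'a=real] by simp
  moreover have "of_int v \<le> real n" using assms(3) by linarith
  ultimately have "0 \<le> (real n - of_int v) * ((real n + of_int v) / 2 - \<bar>e\<bar>)"
    using assms(5) by (intro mult_nonneg_nonneg) auto
  moreover have "\<bar>e\<bar> * (of_int v - of_int t) \<le> \<bar>e\<bar> * (real n - of_int y)"
    using assms(4) by (intro mult_left_mono) (auto simp: t_def)
  ultimately show ?thesis
    by (simp add: barrier_def t_def[symmetric] field_simps power2_eq_square)
qed

section \<open>Crossing a level along a path\<close>

lemma is_path_iff_successively:
  "is_path n p \<eta> \<eta>' \<longleftrightarrow> p \<noteq> [] \<and> hd p = \<eta> \<and> last p = \<eta>' \<and> set p \<subseteq> configs n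
     \<and> successively (neighbours n) p"
  by (simp add: is_path_def successively_conv_nth)

lemma is_path_remdups_adj:
  assumes "xs \<noteq> []" "hd xs = \<eta>" "last xs = \<eta>'" "set xs \<subseteq> configs n"
    and "successively (\<lambda>\<sigma> \<tau>. \<sigma> = \<tau> \<or> neighbours n \<sigma> \<tau>) xs"
  shows "is_path n (remdups_adj xs) \<eta> \<eta>'"
proof -
  have "successively (\<lambda>\<sigma> \<tau>. \<sigma> = \<tau> \<or> neighbours n \<sigma> \<tau>) (remdups_adj xs)"
    using assms(5) by (rule successively_remdups_adjI)
  then have "successively (neighbours n) (remdups_adj xs)"
    using distinct_adj_remdups_adj[of xs]
    by (auto simp: successively_conv_nth distinct_adj_conv_nth)
  then show ?thesis using assms(1-4) by (simp add: is_path_iff_successively)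
qed

lemma int_list_hits_level_upward:
  fixes xs :: "int list"
  assumes "successively (\<lambda>a b. \<bar>b - a\<bar> \<le> 2) xs" "\<forall>x\<in>set xs. even (x - t)"
    and "xs \<noteq> []" "hd xs \<le> t" "t \<le> last xs"
  shows "t \<in> set xs"
  using assms
proof (induction xs)
  case (Cons x xs)
  show ?case
  proof (cases "x = t")
    case False
    moreover have "even (x - t)" "x \<le> t" using Cons.prems(2,4) by auto
    ultimately have "x \<le> t - 2" by presburger
    moreover from this Cons.prems(5) have "xs \<noteq> []" by auto
    ultimately have "hd xs \<le> t" using Cons.prems(1) by (auto simp: successively_Cons)
    with \<open>xs \<noteq> []\<close> Cons.prems have "t \<in> set xs"
      by (intro Cons.IH) (auto simp: successively_Cons)
    then show ?thesis by simp
  qed simp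
qed simp

lemma int_list_hits_level:
  fixes xs :: "int list"
  assumes "successively (\<lambda>a b. \<bar>b - a\<bar> \<le> 2) xs" "\<forall>x\<in>set xs. even (x - t)" "xs \<noteq> []"
    and "min (hd xs) (last xs) \<le> t" "t \<le> max (hd xs) (last xs)"
  shows "t \<in> set xs"
proof (cases "hd xs \<le> t \<and> t \<le> last xs")
  case True
  then show ?thesis using int_list_hits_level_upward assms(1-3) by blast
next
  case False
  then have "hd (map uminus xs) \<le> - t" "- t \<le> last (map uminus xs)"
    using assms(3-5) by (auto simp: hd_map last_map)
  moreover have "successively (\<lambda>a b. \<bar>b - a\<bar> \<le> 2) (map uminus xs)"
    using assms(1) unfolding successively_map by (rule successively_mono) auto
  moreover have "\<forall>x\<in>set (map uminus xs). even (x - - t)"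
    using assms(2) by auto
  ultimately have "- t \<in> set (map uminus xs)"
    using assms(3) by (intro int_list_hits_level_upward) auto
  then show ?thesis by auto
qed

lemma path_hits_level:
  fixes \<phi> :: "(nat \<Rightarrow> int) \<Rightarrow> int"
  assumes "is_path n p \<eta> \<eta>'"
    and "\<And>\<sigma> \<tau>. neighbours n \<sigma> \<tau> \<Longrightarrow> \<bar>\<phi> \<tau> - \<phi> \<sigma>\<bar> \<le> 2"
    and "\<And>\<sigma>. \<sigma> \<in> configs n \<Longrightarrow> even (\<phi> \<sigma> - t)"
    and "min (\<phi> \<eta>) (\<phi> \<eta>') \<le> t" "t \<le> max (\<phi> \<eta>) (\<phi> \<eta>')"
  shows "\<exists>\<sigma>\<in>set p. \<phi> \<sigma> = t"
proof -
  have p: "p \<noteq> []" "hd p = \<eta>" "last p = \<eta>'" "set p \<subseteq> configs n" "successively (neighbours n) p"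
    using assms(1) by (simp_all add: is_path_iff_successively)
  have "t \<in> set (map \<phi> p)"
  proof (rule int_list_hits_level)
    show "successively (\<lambda>a b. \<bar>b - a\<bar> \<le> 2) (map \<phi> p)"
      unfolding successively_map using p(5) by (rule successively_mono) (rule assms(2))
    show "\<forall>x\<in>set (map \<phi> p). even (x - t)" using p(4) assms(3) by auto
  qed (use p(1-3) assms(4,5) in \<open>auto simp: hd_map last_map\<close>)
  then show ?thesis by auto
qed

lemma neighbours_sum_diff_le:
  assumes "neighbours n \<sigma> \<tau>" "A \<subseteq> verts n"
  shows "\<bar>sum \<tau> A - sum \<sigma> A\<bar> \<le> 2"
proof -
  obtain i where i: "{j \<in> verts n. \<sigma> j \<noteq> \<tau> j} = {i}"
    using assms(1) by (auto simp: neighbours_def card_1_singleton_iff)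
  have fin: "finite A" using assms(2) finite_subset by (auto simp: verts_def)
  have "sum \<tau> A - sum \<sigma> A = (\<Sum>j\<in>A. \<tau> j - \<sigma> j)" by (simp add: sum_subtractf)
  also have "\<dots> = (\<Sum>j\<in>A \<inter> {i}. \<tau> j - \<sigma> j)"
    using fin assms(2) i by (intro sum.mono_neutral_right) auto
  finally have "\<bar>sum \<tau> A - sum \<sigma> A\<bar> \<le> \<bar>\<tau> i - \<sigma> i\<bar>"
    by (cases "i \<in> A") auto
  moreover have "i \<in> verts n" "\<sigma> \<in> configs n" "\<tau> \<in> configs n"
    using assms(1) i by (auto simp: neighbours_def)
  then have "\<sigma> i \<in> {-1, 1}" "\<tau> i \<in> {-1, 1}" by (auto simp: configs_def)
  ultimately show ?thesis by auto
qed

lemma block_mag_neighbours_diff_le: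
  "neighbours n \<sigma> \<tau> \<Longrightarrow> d \<le> n \<Longrightarrow> \<bar>block_mag n d \<tau> - block_mag n d \<sigma>\<bar> \<le> 2"
  unfolding block_mag_eq_sum by (rule neighbours_sum_diff_le) (auto simp: verts_def)

section \<open>A path staying below the barrier\<close>

definition interpolate :: "(nat \<Rightarrow> int) \<Rightarrow> (nat \<Rightarrow> int) \<Rightarrow> nat \<Rightarrow> nat \<Rightarrow> int" where
  "interpolate \<sigma> \<tau> k j = (if j \<le> k then \<tau> j else \<sigma> j)"

lemma interpolate_in_configs:
  "\<sigma> \<in> configs n \<Longrightarrow> \<tau> \<in> configs n \<Longrightarrow> interpolate \<sigma> \<tau> k \<in> configs n"
  by (auto simp: configs_def interpolate_def)

lemma interpolate_neighbours:
  assumes "\<sigma> \<in> configs n" "\<tau> \<in> configs n"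
  shows "interpolate \<sigma> \<tau> k = interpolate \<sigma> \<tau> (Suc k)
    \<or> neighbours n (interpolate \<sigma> \<tau> k) (interpolate \<sigma> \<tau> (Suc k))"
proof (cases "\<sigma> (Suc k) = \<tau> (Suc k)")
  case True
  then show ?thesis by (auto simp: interpolate_def le_Suc_eq)
next
  case False
  then have "Suc k \<in> verts n" using assms configs_outside_verts by metis
  with False have "{j \<in> verts n. interpolate \<sigma> \<tau> k j \<noteq> interpolate \<sigma> \<tau> (Suc k) j} = {Suc k}"
    by (auto simp: interpolate_def le_Suc_eq)
  then show ?thesis using interpolate_in_configs[OF assms] by (simp add: neighbours_def)
qed

definition interpolation_path :: "nat \<Rightarrow> (nat \<Rightarrow> int) \<Rightarrow> (nat \<Rightarrow> int) \<Rightarrow> (nat \<Rightarrow> int) list" where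
  "interpolation_path n \<sigma> \<tau> = remdups_adj (map (interpolate \<sigma> \<tau>) [0..<2*n+1])"

lemma set_interpolation_path: "set (interpolation_path n \<sigma> \<tau>) \<subseteq> range (interpolate \<sigma> \<tau>)"
  by (auto simp: interpolation_path_def)

lemma is_path_interpolation_path:
  assumes "\<sigma> \<in> configs n" "\<tau> \<in> configs n"
  shows "is_path n (interpolation_path n \<sigma> \<tau>) \<sigma> \<tau>"
  unfolding interpolation_path_def
proof (rule is_path_remdups_adj)
  have "interpolate \<sigma> \<tau> 0 j = \<sigma> j" "interpolate \<sigma> \<tau> (2*n) j = \<tau> j" for j
    using configs_outside_verts[OF assms(1), of j] configs_outside_verts[OF assms(2), of j]
    by (auto simp: interpolate_def verts_def)
  then show "hd (map (interpolate \<sigma> \<tau>) [0..<2*n+1]) = \<sigma>"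
    "last (map (interpolate \<sigma> \<tau>) [0..<2*n+1]) = \<tau>"
    by (simp_all del: upt_Suc add: hd_map last_map fun_eq_iff)
  show "successively (\<lambda>\<sigma>' \<tau>'. \<sigma>' = \<tau>' \<or> neighbours n \<sigma>' \<tau>') (map (interpolate \<sigma> \<tau>) [0..<2*n+1])"
    using interpolate_neighbours[OF assms] by (simp del: upt_Suc add: successively_conv_nth)
qed (use interpolate_in_configs[OF assms] in auto)

lemma excess_with_constant_block:
  assumes "\<sigma> \<in> configs n" "c = 1 \<or> c = -1" "d \<in> {0, n}" "\<forall>i\<in>{1..n}. \<sigma> (i + (n - d)) = c"
  shows "excess n \<epsilon> \<sigma> = (real n ^ 2 - of_int (block_mag n d \<sigma>) ^ 2) / 2
      + \<bar>\<epsilon> * c\<bar> * real n - \<epsilon> * c * of_int (block_mag n d \<sigma>)"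
proof -
  have "block_mag n (n - d) \<sigma> = c * int n" "overlap n \<sigma> = c * block_mag n d \<sigma>"
    using assms(3,4) by (auto simp: block_mag_def overlap_def sum_distrib_left mult.commute)
  moreover have "\<bar>\<epsilon> * c\<bar> = \<bar>\<epsilon>\<bar>" "(of_int c :: real)\<^sup>2 = 1" using assms(2) by (auto simp: abs_mult)
  ultimately show ?thesis
    using assms(3) by (auto simp: excess_def power_mult_distrib)
qed

lemma excess_interpolate_le_barrier:
  assumes "s1 \<in> stable_states n \<epsilon> 0" "s2 \<in> stable_states n \<epsilon> 0" "\<bar>\<epsilon>\<bar> \<le> 1"
  shows "excess n \<epsilon> (interpolate s1 s2 k) \<le> barrier n \<epsilon>"
proof -
  let ?\<sigma> = "interpolate s1 s2 k"
  have \<sigma>: "?\<sigma> \<in> configs n"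
    using assms(1,2) by (intro interpolate_in_configs) (auto simp: stable_states_def)
  obtain d c where dc: "d \<in> {0, n}" "c = 1 \<or> c = -1" "\<forall>i\<in>{1..n}. ?\<sigma> (i + (n - d)) = c"
  proof (cases "k \<le> n")
    case True
    obtain c where "c = 1 \<or> c = -1" "\<forall>i\<in>{1..n}. s1 (i + n) = c"
      using stable_block_constant[OF assms(1), of n] by auto
    with True show ?thesis by (intro that[of 0 c]) (auto simp: interpolate_def)
  next
    case False
    obtain c where "c = 1 \<or> c = -1" "\<forall>i\<in>{1..n}. s2 (i + 0) = c"
      using stable_block_constant[OF assms(2), of 0] by auto
    with False show ?thesis by (intro that[of n c]) (auto simp: interpolate_def)
  qed
  have "even (block_mag n d ?\<sigma> - int n)" using even_block_mag[OF \<sigma>] dc(1) by auto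
  moreover have "\<bar>\<epsilon> * c\<bar> \<le> 1" "barrier n (\<epsilon> * c) = barrier n \<epsilon>"
    using assms(3) dc(2) by (auto simp: barrier_def abs_mult)
  ultimately show ?thesis
    using excess_with_constant_block[OF \<sigma> dc(2,1,3)] excess_profile_le_barrier by metis
qed

section \<open>Every path reaches the barrier\<close>

lemma block_term_le_excess:
  assumes "\<sigma> \<in> configs n" "d \<in> {0, n}"
  shows "(real n ^ 2 - of_int (block_mag n d \<sigma>) ^ 2) / 2 \<le> excess n \<epsilon> \<sigma>"
proof -
  have "d = 0 \<or> d = n" using assms(2) by auto
  then show ?thesis
    using block_mag_squared_le[OF assms(1) le0] block_mag_squared_le[OF assms(1) order_refl]
      overlap_energy_le[OF assms(1), of \<epsilon>]
    unfolding excess_def by (elim disjE; simp only:; argo)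
qed

lemma path_hits_critical_block_mag:
  assumes "is_path n p s1 s2" "d \<in> {0, n}"
    and "\<bar>block_mag n d s1\<bar> = int n" "\<bar>block_mag n d s2\<bar> = int n"
    and "block_mag n d s1 \<noteq> block_mag n d s2"
  shows "\<exists>\<sigma>\<in>set p. block_mag n d \<sigma> = critical_mag n"
proof (rule path_hits_level[OF assms(1)])
  show "\<bar>block_mag n d \<tau> - block_mag n d \<sigma>\<bar> \<le> 2" if "neighbours n \<sigma> \<tau>" for \<sigma> \<tau>
    using block_mag_neighbours_diff_le[OF that] assms(2) by auto
  show "even (block_mag n d \<sigma> - critical_mag n)" if "\<sigma> \<in> configs n" for \<sigma>
    using even_diff_critical_mag[OF even_block_mag[OF that]] assms(2) by auto
qed (use assms(3-5) critical_mag_range[of n] in auto)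

lemma path_meets_barrier_zero_field:
  assumes "s1 \<in> stable_states n 0 0" "s2 \<in> stable_states n 0 0" "s1 \<noteq> s2"
    and "is_path n p s1 s2"
  shows "\<exists>\<sigma>\<in>set p. barrier n 0 \<le> excess n 0 \<sigma>"
proof -
  have s: "s1 \<in> configs n" "excess n 0 s1 = 0" "s2 \<in> configs n" "excess n 0 s2 = 0"
    using assms(1,2) by (auto simp: stable_states_eq)
  note extremal = excess_eq_0_imp(1)[OF s(1,2)] excess_eq_0_imp(1)[OF s(3,4)]
  obtain d where d: "d \<in> {0, n}" "block_mag n d s1 \<noteq> block_mag n d s2"
    using configs_eqI_extremal_block_mags[OF s(1,3) extremal(1)] assms(3) by metis
  then obtain \<sigma> where "\<sigma> \<in> set p" "block_mag n d \<sigma> = critical_mag n"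
    using path_hits_critical_block_mag[OF assms(4) d(1) extremal(1,2)] by blast
  moreover have "\<sigma> \<in> configs n" using \<open>\<sigma> \<in> set p\<close> assms(4) by (auto simp: is_path_def)
  ultimately show ?thesis
    using block_term_le_excess[of \<sigma> n d 0] d(1) by (auto simp: barrier_def)
qed

lemma barrier_le_excess_at_critical_level:
  fixes \<epsilon> :: real and c :: int
  assumes "n \<ge> 2" "\<sigma> \<in> configs n" "\<bar>\<epsilon>\<bar> \<le> 1" "c = 1 \<or> c = -1" "\<epsilon> * of_int c = \<bar>\<epsilon>\<bar>"
    and "min (block_mag n 0 \<sigma>) (c * block_mag n n \<sigma>) = critical_mag n"
  shows "barrier n \<epsilon> \<le> excess n \<epsilon> \<sigma>"
proof -
  define S T Y where "S = block_mag n 0 \<sigma>" and "T = c * block_mag n n \<sigma>" and "Y = c * overlap n \<sigma>"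
  define t where "t = critical_mag n"
  have "of_int T ^ 2 = (of_int (block_mag n n \<sigma>) ^ 2 :: real)"
    using assms(4) by (auto simp: T_def)
  moreover have "\<epsilon> * of_int (overlap n \<sigma>) = \<bar>\<epsilon>\<bar> * of_int Y"
    using assms(4,5) by (auto simp: Y_def)
  ultimately have excess: "excess n \<epsilon> \<sigma> = (real n ^ 2 - of_int S ^ 2) / 2
      + (real n ^ 2 - of_int T ^ 2) / 2 + \<bar>\<epsilon>\<bar> * (real n - of_int Y)"
    by (simp add: excess_def S_def right_diff_distrib)
  have Y: "Y \<le> int n - \<bar>S - T\<bar>"
    using signed_overlap_le[OF assms(2,4)] by (simp add: S_def T_def Y_def)
  have "S \<le> int n" "T \<le> int n"
    using block_mag_abs_le[OF assms(2) le0] block_mag_abs_le[OF assms(2) order_refl] assms(4)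
    by (auto simp: S_def T_def)
  then consider "S = t" "t \<le> T" "T \<le> int n" | "T = t" "t \<le> S" "S \<le> int n"
    using assms(6) by (fastforce simp: S_def T_def t_def min_def split: if_splits)
  then show ?thesis
  proof cases
    case 1
    then show ?thesis
      using barrier_le_excess_profile[OF assms(1), of T Y \<epsilon>] Y assms(3) excess by (simp add: t_def)
  next
    case 2
    then show ?thesis
      using barrier_le_excess_profile[OF assms(1), of S Y \<epsilon>] Y assms(3) excess
      by (simp add: t_def abs_minus_commute)
  qed
qed

lemma path_meets_barrier_nonzero_field:
  assumes "n \<ge> 2" "\<epsilon> \<noteq> 0" "\<bar>\<epsilon>\<bar> \<le> 1"
    and "s1 \<in> stable_states n \<epsilon> 0" "s2 \<in> stable_states n \<epsilon> 0" "s1 \<noteq> s2"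
    and "is_path n p s1 s2"
  shows "\<exists>\<sigma>\<in>set p. barrier n \<epsilon> \<le> excess n \<epsilon> \<sigma>"
proof -
  define c :: int where "c = (if \<epsilon> \<ge> 0 then 1 else -1)"
  have c: "c = 1 \<or> c = -1" "\<epsilon> * of_int c = \<bar>\<epsilon>\<bar>" by (auto simp: c_def)
  define g where "g \<sigma> = min (block_mag n 0 \<sigma>) (c * block_mag n n \<sigma>)" for \<sigma>
  have s: "s1 \<in> configs n" "excess n \<epsilon> s1 = 0" "s2 \<in> configs n" "excess n \<epsilon> s2 = 0"
    using assms(4,5) by (auto simp: stable_states_eq)
  note extremal = excess_eq_0_imp(1)[OF s(1,2)] excess_eq_0_imp(1)[OF s(3,4)]
  note aligned = stable_aligned[OF _ assms(2) c]
  have differ: "block_mag n 0 s1 \<noteq> block_mag n 0 s2"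
  proof
    assume "block_mag n 0 s1 = block_mag n 0 s2"
    then have "block_mag n d s2 = block_mag n d s1" if "d \<in> {0, n}" for d
      using that aligned[OF assms(4)] aligned[OF assms(5)] c(1) by auto
    then show False using configs_eqI_extremal_block_mags[OF s(1,3) extremal(1)] assms(6) by blast
  qed
  have ends: "g s1 = block_mag n 0 s1" "g s2 = block_mag n 0 s2"
    using aligned[OF assms(4)] aligned[OF assms(5)] by (simp_all add: g_def)
  have "\<exists>\<sigma>\<in>set p. g \<sigma> = critical_mag n"
  proof (rule path_hits_level[OF assms(7)])
    show "\<bar>g \<tau> - g \<sigma>\<bar> \<le> 2" if "neighbours n \<sigma> \<tau>" for \<sigma> \<tau>
      using block_mag_neighbours_diff_le[OF that le0] block_mag_neighbours_diff_le[OF that order_refl] c(1)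
      unfolding g_def by auto
    show "even (g \<sigma> - critical_mag n)" if "\<sigma> \<in> configs n" for \<sigma>
      using even_diff_critical_mag[OF even_block_mag[OF that le0]]
        even_diff_critical_mag[OF even_block_mag[OF that order_refl]] c(1)
      unfolding g_def by (auto simp: min_def)
  qed (use ends differ extremal[of 0] critical_mag_range[of n] in auto)
  then obtain \<sigma> where \<sigma>: "\<sigma> \<in> set p" "g \<sigma> = critical_mag n" by blast
  moreover have "\<sigma> \<in> configs n" using \<sigma>(1) assms(7) by (auto simp: is_path_def)
  ultimately show ?thesis
    using barrier_le_excess_at_critical_level[OF assms(1) _ assms(3) c] by (auto simp: g_def)
qed

lemma path_meets_barrier:
  assumes "n \<ge> 2" "\<bar>\<epsilon>\<bar> \<le> 1"
    and "s1 \<in> stable_states n \<epsilon> 0" "s2 \<in> stable_states n \<epsilon> 0" "s1 \<noteq> s2"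
    and "is_path n p s1 s2"
  shows "\<exists>\<sigma>\<in>set p. barrier n \<epsilon> \<le> excess n \<epsilon> \<sigma>"
proof (cases "\<epsilon> = 0")
  case True
  then show ?thesis using path_meets_barrier_zero_field assms(3-6) by simp
qed (use path_meets_barrier_nonzero_field assms in blast)

lemma finite_configs: "finite (configs n)"
proof (rule finite_subset)
  show "configs n \<subseteq> {\<sigma>. \<forall>i. (i \<in> verts n \<longrightarrow> \<sigma> i \<in> {-1, 1}) \<and> (i \<notin> verts n \<longrightarrow> \<sigma> i = 0)}"
    by (auto simp: configs_def)
  show "finite {\<sigma>. \<forall>i. (i \<in> verts n \<longrightarrow> \<sigma> i \<in> {-1, 1::int}) \<and> (i \<notin> verts n \<longrightarrow> \<sigma> i = 0)}"
    by (rule finite_set_of_finite_funs) (auto simp: verts_def)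
qed

lemma Phi_eqI:
  assumes "is_path n p\<^sub>0 \<eta> \<eta>'" "\<And>\<sigma>. \<sigma> \<in> set p\<^sub>0 \<Longrightarrow> Ham n \<epsilon> h \<sigma> \<le> B"
    and "\<And>p. is_path n p \<eta> \<eta>' \<Longrightarrow> \<exists>\<sigma>\<in>set p. B \<le> Ham n \<epsilon> h \<sigma>"
  shows "Phi n \<epsilon> h \<eta> \<eta>' = B"
proof -
  define V where "V = {Max (Ham n \<epsilon> h ` set p) | p. is_path n p \<eta> \<eta>'}"
  have max_in: "Max (Ham n \<epsilon> h ` set p) \<in> Ham n \<epsilon> h ` set p" if "is_path n p \<eta> \<eta>'" for p
    using that by (intro Max_in) (auto simp: is_path_def)
  have "V \<subseteq> Ham n \<epsilon> h ` configs n"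
  proof
    fix v assume "v \<in> V"
    then obtain p where p: "is_path n p \<eta> \<eta>'" "v = Max (Ham n \<epsilon> h ` set p)"
      by (auto simp: V_def)
    then have "set p \<subseteq> configs n" by (simp add: is_path_def)
    with max_in[OF p(1)] p(2) show "v \<in> Ham n \<epsilon> h ` configs n" by auto
  qed
  then have "finite V" using finite_configs finite_subset by blast
  have "Max (Ham n \<epsilon> h ` set p\<^sub>0) \<in> V" using assms(1) by (auto simp: V_def)
  moreover have "Max (Ham n \<epsilon> h ` set p\<^sub>0) \<le> B" using max_in[OF assms(1)] assms(2) by auto
  moreover have "B \<le> v" if v: "v \<in> V" for v
  proof -
    obtain p where p: "is_path n p \<eta> \<eta>'" "v = Max (Ham n \<epsilon> h ` set p)"
      using v by (auto simp: V_def)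
    obtain \<sigma> where "\<sigma> \<in> set p" "B \<le> Ham n \<epsilon> h \<sigma>" using assms(3)[OF p(1)] by blast
    then show ?thesis unfolding p(2) by (meson List.finite_set Max_ge finite_imageI image_eqI order_trans)
  qed
  ultimately have "Min V = B"
    using \<open>finite V\<close> by (metis Min_in Min_le empty_iff order_antisym order_trans)
  then show ?thesis by (simp add: Phi_def V_def)
qed

theorem corollary4p6:
  fixes n :: nat and \<epsilon> :: real and s1 s2 :: "nat \<Rightarrow> int"
  assumes "n \<ge> 2" and "-1 \<le> \<epsilon>" and "\<epsilon> \<le> 1"
    and "s1 \<in> stable_states n \<epsilon> 0" and "s2 \<in> stable_states n \<epsilon> 0" and "s1 \<noteq> s2"
  shows "Phi n \<epsilon> 0 s1 s2 - Ham n \<epsilon> 0 s1 =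
    (if even n then real n ^ 2 / 2 + \<bar>\<epsilon>\<bar> * real n
     else (real n ^ 2 - 1) / 2 + \<bar>\<epsilon>\<bar> * (real n + 1))"
proof -
  have \<epsilon>: "\<bar>\<epsilon>\<bar> \<le> 1" using assms(2,3) by auto
  have s: "s1 \<in> configs n" "s2 \<in> configs n" "excess n \<epsilon> s1 = 0"
    using assms(4,5) by (auto simp: stable_states_eq)
  have "Phi n \<epsilon> 0 s1 s2 = ground_energy n \<epsilon> + barrier n \<epsilon>"
  proof (rule Phi_eqI[OF is_path_interpolation_path[OF s(1,2)]])
    fix \<sigma> assume "\<sigma> \<in> set (interpolation_path n s1 s2)"
    then obtain k where "\<sigma> = interpolate s1 s2 k" using set_interpolation_path by blast
    then show "Ham n \<epsilon> 0 \<sigma> \<le> ground_energy n \<epsilon> + barrier n \<epsilon>"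
      using excess_interpolate_le_barrier[OF assms(4,5) \<epsilon>, of k] interpolate_in_configs[OF s(1,2)]
      by (simp add: Ham_eq_ground_energy_plus_excess)
  next
    fix p assume "is_path n p s1 s2"
    then show "\<exists>\<sigma>\<in>set p. ground_energy n \<epsilon> + barrier n \<epsilon> \<le> Ham n \<epsilon> 0 \<sigma>"
      using path_meets_barrier[OF assms(1) \<epsilon> assms(4-6)]
      by (force simp: Ham_eq_ground_energy_plus_excess is_path_def)
  qed
  then show ?thesis
    using Ham_eq_ground_energy_plus_excess[OF s(1)] s(3)
    by (simp add: barrier_def critical_mag_def)
qed

end
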